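(* Let $D$ be a friendship digraph and let $u,v$ be two distinct vertices of $D$. If $(u,v)\notin A(D)$ or $(v,u)\notin A(D)$, then $d^+(u)=d^+(v)$.
   Context: All digraphs are finite and have neither loops nor parallel arcs (a pair of opposite arcs $(u,v)$ and $(v,u)$ is allowed). $A(D)$ is the arc set and $d^+(v)$ the outdegree of $v$. A friendship digraph is a nontrivial digraph (at least two vertices) in which any two distinct vertices have exactly one common out-neighbor. *)

theory Defs
  imports Main
begin

text \<open>A digraph is given by a finite vertex set V and an arc set A \<subseteq> V \<times> V
  without loops (parallel arcs are impossible since A is a set; opposite arcs allowed).\<close>
definition digraph :: "'a set \<Rightarrow> ('a \<times> 'a) set \<Rightarrow> bool" where
  "digraph V A \<longleftrightarrow> finite V \<and> A \<subseteq> V \<times> V \<and> (\<forall>v. (v, v) \<notin> A)"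

definition out_nbrs :: "('a \<times> 'a) set \<Rightarrow> 'a \<Rightarrow> 'a set" where
  "out_nbrs A v = {w. (v, w) \<in> A}"

definition outdeg :: "('a \<times> 'a) set \<Rightarrow> 'a \<Rightarrow> nat" where
  "outdeg A v = card (out_nbrs A v)"

definition friendship_digraph :: "'a set \<Rightarrow> ('a \<times> 'a) set \<Rightarrow> bool" where
  "friendship_digraph V A \<longleftrightarrow> digraph V A \<and> card V \<ge> 2 \<and>
     (\<forall>x\<in>V. \<forall>y\<in>V. x \<noteq> y \<longrightarrow> (\<exists>!w. w \<in> V \<and> (x, w) \<in> A \<and> (y, w) \<in> A))"

end

theory Submission
  imports Defs Complex_Main
begin

text \<open>Call a pair \<open>(x, z)\<close> of vertices a non-arc if \<open>(x, z) \<notin> A\<close>; loops are non-arcs.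
  If \<open>(x, z)\<close> is a non-arc, sending an in-neighbour \<open>p\<close> of \<open>z\<close> to the common out-neighbour
  of \<open>x\<close> and \<open>p\<close> is injective, so the in-degree of \<open>z\<close> is at most the out-degree of \<open>x\<close>.
  In the complementary digraph of non-arcs this says that the out-degree of the tail of
  every arc is at most the in-degree of its head. Summing \<open>1/d\<^sup>+(x) - 1/d\<^sup>-(z)\<close> over all
  arcs \<open>(x, z)\<close> of the complement gives \<open>|V| - |V| = 0\<close>, a sum of nonnegative terms, so
  equality holds on every non-arc. Applied to the non-arcs \<open>(u, v)\<close> and \<open>(v, v)\<close> this
  yields \<open>d\<^sup>+(u) = d\<^sup>+(v)\<close>.\<close>

lemma sum_inverse_card_Image_singleton:
  assumes "finite X" "finite Y" "R \<subseteq> X \<times> Y" "\<forall>x\<in>X. R `` {x} \<noteq> {}"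
  shows "(\<Sum>(x, y)\<in>R. 1 / real (card (R `` {x}))) = real (card X)"
proof -
  have R_Sigma: "R = Sigma X (\<lambda>x. R `` {x})"
    using assms(3) by auto
  have "finite (R `` {x})" for x
    using assms(2,3) by (auto intro: finite_subset[OF Image_subset])
  then have "(\<Sum>(x, y)\<in>R. 1 / real (card (R `` {x})))
      = (\<Sum>x\<in>X. \<Sum>y\<in>R `` {x}. 1 / real (card (R `` {x})))"
    by (subst R_Sigma, subst sum.Sigma) (use assms(1) in auto)
  also have "\<dots> = (\<Sum>x\<in>X. 1)"
    using assms(4) \<open>\<And>x. finite (R `` {x})\<close> by (intro sum.cong) auto
  finally show ?thesis by simp
qed

lemma card_Image_eq_if_card_Image_le:
  fixes R :: "('a \<times> 'b) set"
  assumes "finite X" "finite Y" "card X = card Y" "R \<subseteq> X \<times> Y"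
    and "\<forall>x\<in>X. R `` {x} \<noteq> {}" "\<forall>y\<in>Y. R\<inverse> `` {y} \<noteq> {}"
    and le: "\<forall>(x, y)\<in>R. card (R `` {x}) \<le> card (R\<inverse> `` {y})"
    and "(x, y) \<in> R"
  shows "card (R `` {x}) = card (R\<inverse> `` {y})"
proof -
  define t where "t x y = 1 / real (card (R `` {x})) - 1 / real (card (R\<inverse> `` {y}))" for x y
  have "finite R"
    using assms(1,2,4) finite_subset by blast
  have "R\<inverse> \<subseteq> Y \<times> X"
    using assms(4) by auto
  have finite_Image: "finite (R `` {x})" "finite (R\<inverse> `` {y})" for x y
    using assms(1,2,4) \<open>R\<inverse> \<subseteq> Y \<times> X\<close> by (auto intro: finite_subset[OF Image_subset])
  have "(\<Sum>(x, y)\<in>R. 1 / real (card (R\<inverse> `` {y}))) = (\<Sum>(y, x)\<in>R\<inverse>. 1 / real (card (R\<inverse> `` {y})))"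
    by (rule sum.reindex_bij_witness[of _ prod.swap prod.swap]) auto
  also have "\<dots> = real (card Y)"
    using sum_inverse_card_Image_singleton[OF assms(2,1) \<open>R\<inverse> \<subseteq> Y \<times> X\<close>] assms(6) by blast
  finally have "(\<Sum>(x, y)\<in>R. t x y) = 0"
    using sum_inverse_card_Image_singleton[OF assms(1,2,4,5)] assms(3)
    by (simp add: t_def sum_subtractf case_prod_beta)
  moreover have "t x y \<ge> 0" if "(x, y) \<in> R" for x y
  proof -
    have "R `` {x} \<noteq> {}"
      using that by blast
    then have "card (R `` {x}) > 0"
      using finite_Image by (simp add: card_gt_0_iff)
    moreover have "card (R `` {x}) \<le> card (R\<inverse> `` {y})"
      using le that by blast
    ultimately show ?thesis
      unfolding t_def by (simp add: frac_le)
  qed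
  ultimately have "t x y = 0"
    using sum_nonneg_eq_0_iff[OF \<open>finite R\<close>, of "\<lambda>(x, y). t x y"] assms(8) by auto
  moreover have "card (R\<inverse> `` {y}) > 0"
    using finite_Image assms(8) by (auto simp: card_gt_0_iff)
  ultimately show ?thesis
    unfolding t_def by simp
qed

lemma out_nbrs_eq_Image: "out_nbrs A v = A `` {v}"
  by (auto simp: out_nbrs_def)

lemma card_in_nbrs_le_outdeg_if_not_arc:
  assumes fd: "friendship_digraph V A" and "x \<in> V" "(x, z) \<notin> A"
  shows "card (A\<inverse> `` {z}) \<le> outdeg A x"
proof -
  have "finite V" and "A \<subseteq> V \<times> V"
    and common: "\<And>p q. p \<in> V \<Longrightarrow> q \<in> V \<Longrightarrow> p \<noteq> q \<Longrightarrow> \<exists>!w. w \<in> V \<and> (p, w) \<in> A \<and> (q, w) \<in> A"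
    using fd unfolding friendship_digraph_def digraph_def by auto
  have "\<forall>p\<in>A\<inverse> `` {z}. \<exists>w. (x, w) \<in> A \<and> (p, w) \<in> A"
  proof
    fix p assume "p \<in> A\<inverse> `` {z}"
    then have "p \<in> V" "p \<noteq> x"
      using \<open>A \<subseteq> V \<times> V\<close> \<open>(x, z) \<notin> A\<close> by auto
    then show "\<exists>w. (x, w) \<in> A \<and> (p, w) \<in> A"
      using common[OF \<open>x \<in> V\<close>] by blast
  qed
  then obtain f where f: "\<forall>p\<in>A\<inverse> `` {z}. (x, f p) \<in> A \<and> (p, f p) \<in> A"
    by metis
  have "inj_on f (A\<inverse> `` {z})"
  proof (rule inj_onI, rule ccontr)
    fix p q assume p: "p \<in> A\<inverse> `` {z}" and q: "q \<in> A\<inverse> `` {z}" and "f p = f q" "p \<noteq> q"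
    \<comment> \<open>both \<open>z\<close> and \<open>f p\<close> are common out-neighbours of \<open>p\<close> and \<open>q\<close>\<close>
    have "(p, z) \<in> A" "(q, z) \<in> A" "(p, f p) \<in> A" "(q, f q) \<in> A"
      using f p q by auto
    then have "f p = z"
      using common[of p q] \<open>f p = f q\<close> \<open>p \<noteq> q\<close> \<open>A \<subseteq> V \<times> V\<close> by auto
    then show False
      using f p \<open>(x, z) \<notin> A\<close> by auto
  qed
  moreover have "f ` (A\<inverse> `` {z}) \<subseteq> A `` {x}"
    using f by auto
  moreover have "finite (A `` {x})"
    using \<open>finite V\<close> \<open>A \<subseteq> V \<times> V\<close> by (auto intro: finite_subset[OF Image_subset])
  ultimately show ?thesis
    unfolding outdeg_def out_nbrs_eq_Image by (rule card_inj_on_le)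
qed

lemma card_Image_complement:
  assumes "finite V" "A \<subseteq> V \<times> V" "x \<in> V"
  shows "card ((V \<times> V - A) `` {x}) = card V - card (A `` {x})"
proof -
  have "(V \<times> V - A) `` {x} = V - A `` {x}" "A `` {x} \<subseteq> V"
    using assms(2,3) by auto
  then show ?thesis
    using assms(1) by (simp add: card_Diff_subset finite_subset)
qed

lemma outdeg_eq_if_not_arc:
  assumes fd: "friendship_digraph V A" and "u \<in> V" "v \<in> V" "(u, v) \<notin> A"
  shows "outdeg A u = outdeg A v"
proof -
  have "finite V" and "A \<subseteq> V \<times> V" and loopless: "\<And>x. (x, x) \<notin> A"
    using fd unfolding friendship_digraph_def digraph_def by auto
  define N where "N = V \<times> V - A"
  have card_out_N: "card (N `` {x}) = card V - outdeg A x" if "x \<in> V" for x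
    using card_Image_complement[OF \<open>finite V\<close> \<open>A \<subseteq> V \<times> V\<close> that]
    unfolding N_def outdeg_def out_nbrs_eq_Image .
  have card_in_N: "card (N\<inverse> `` {z}) = card V - card (A\<inverse> `` {z})" if "z \<in> V" for z
  proof -
    have "N\<inverse> = V \<times> V - A\<inverse>"
      unfolding N_def by auto
    then show ?thesis
      using card_Image_complement[OF \<open>finite V\<close> _ that, of "A\<inverse>"] \<open>A \<subseteq> V \<times> V\<close> by auto
  qed
  have "N \<subseteq> V \<times> V"
    unfolding N_def by blast
  have diagonal: "(x, x) \<in> N" if "x \<in> V" for x
    using that loopless unfolding N_def by blast
  have "card (N `` {x}) \<le> card (N\<inverse> `` {z})" if "(x, z) \<in> N" for x z
  proof -
    have "x \<in> V" "z \<in> V" "(x, z) \<notin> A"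
      using that unfolding N_def by auto
    then show ?thesis
      using card_in_nbrs_le_outdeg_if_not_arc[OF fd] card_out_N card_in_N by (simp add: diff_le_mono2)
  qed
  then have card_N_eq: "card (N `` {x}) = card (N\<inverse> `` {z})" if "(x, z) \<in> N" for x z
    using card_Image_eq_if_card_Image_le[OF \<open>finite V\<close> \<open>finite V\<close> refl \<open>N \<subseteq> V \<times> V\<close> _ _ _ that]
      diagonal by blast
  have "(u, v) \<in> N"
    using \<open>u \<in> V\<close> \<open>v \<in> V\<close> \<open>(u, v) \<notin> A\<close> unfolding N_def by simp
  then have "card (N `` {u}) = card (N `` {v})"
    using card_N_eq diagonal[OF \<open>v \<in> V\<close>] by metis
  moreover have "outdeg A x \<le> card V" for x
    unfolding outdeg_def out_nbrs_eq_Image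
    using \<open>finite V\<close> \<open>A \<subseteq> V \<times> V\<close> by (simp add: Image_subset card_mono)
  ultimately show ?thesis
    using card_out_N \<open>u \<in> V\<close> \<open>v \<in> V\<close> by (metis diff_diff_cancel)
qed

theorem proposition2p7:
  assumes "friendship_digraph V A"
    and "u \<in> V" and "v \<in> V" and "u \<noteq> v"
    and "(u, v) \<notin> A \<or> (v, u) \<notin> A"
  shows "outdeg A u = outdeg A v"
  using assms outdeg_eq_if_not_arc[of V A u v] outdeg_eq_if_not_arc[of V A v u] by auto

end
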